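(* There is an absolute constant $C>0$ such that the following holds for all integers $k\ge 2$ (with $k$ even), all $\gamma\in(0,1]$ and all $\varepsilon\in(0,1]$. If $n\ge C\,k/(\gamma^2\varepsilon^2)$, then there exists a public-coin $\varepsilon$-LDP protocol with $n$ users, in which each user sends a single bit, together with a decision rule for the curator, that is a uniformity tester over $[k]$ with distance parameter $\gamma$. (In this protocol the shared randomness consists of $O(1)$ independent uniformly random subsets $S\subseteq[k]$ of cardinality $k/2$; a user assigned to subset $S$ sends the bit $\mathbf 1\{X\in S\}$ after flipping it with probability $1/(1+e^{\varepsilon})$.)
   Context: For a finite set $\Omega$, $\Delta(\Omega)$ denotes the set of probability distributions on $\Omega$, and $d_{TV}(p,q)=\sup_{S\subseteq\Omega}(p(S)-q(S))=\frac12\|p-q\|_1$. $u$ denotes the uniform distribution on $[k]=\{1,\dots,k\}$. Protocol model: there are $n$ users; user $j$ holds $X_j$, where $X_1,\dots,X_n$ are i.i.d. from an unknown distribution $p$. A public-coin protocol consists of a shared random variable $U$ independent of the samples, and for each user $j$ and each value $v$ of $U$ a channel (Markov kernel) $W_j^{v}$ from the data domain to a finite message set; user $j$ sends $Z_j\sim W_j^{U}(\cdot\mid X_j)$, independently across users given $U$ and the samples; the curator outputs a (possibly randomized) function of $(U,Z_1,\dots,Z_n)$. The protocol is private-coin if $U$ is constant, and symmetric if $W_j^v$ does not depend on $j$. It is $\varepsilon$-LDP if $W_j^v(z\mid x)\le e^{\varepsilon}W_j^v(z\mid x')$ for all $j,v,z,x,x'$. A uniformity tester over $[k]$ with distance parameter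 $\gamma$ is a protocol whose curator output, for every $p\in\Delta([k])$, equals ``uniform'' with probability at least $2/3$ if $p=u$, and equals ``not uniform'' with probability at least $2/3$ if $d_{TV}(p,u)>\gamma$ (probabilities over samples, shared and private randomness). *)

theory Defs
  imports "HOL-Probability.Probability"
begin

definition unif :: "nat \<Rightarrow> nat pmf" where
  "unif k = pmf_of_set {1..k}"

definition dTV :: "nat pmf \<Rightarrow> nat pmf \<Rightarrow> real" where
  "dTV p q = (SUP S. measure_pmf.prob p S - measure_pmf.prob q S)"

text \<open>U : distribution of the shared random variable (values: lists of subsets of nat);
  W j v : channel of user j given shared value v (data \<mapsto> distribution on one bit);
  D v zs : curator's randomized decision (True = "uniform") from shared value and messages.\<close>
definition protocol_out ::
  "nat \<Rightarrow> nat set list pmf \<Rightarrow> (nat \<Rightarrow> nat set list \<Rightarrow> nat \<Rightarrow> bool pmf)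
     \<Rightarrow> (nat set list \<Rightarrow> (nat \<Rightarrow> bool) \<Rightarrow> bool pmf) \<Rightarrow> nat pmf \<Rightarrow> bool pmf" where
  "protocol_out n U W D p =
     do { v \<leftarrow> U;
          xs \<leftarrow> Pi_pmf {..<n} 0 (\<lambda>_. p);
          zs \<leftarrow> Pi_pmf {..<n} False (\<lambda>j. W j v (xs j));
          D v zs }"

definition is_LDP ::
  "real \<Rightarrow> nat \<Rightarrow> nat \<Rightarrow> (nat \<Rightarrow> nat set list \<Rightarrow> nat \<Rightarrow> bool pmf) \<Rightarrow> bool" where
  "is_LDP \<epsilon> k n W \<longleftrightarrow>
     (\<forall>j<n. \<forall>v z. \<forall>x\<in>{1..k}. \<forall>x'\<in>{1..k}. pmf (W j v x) z \<le> exp \<epsilon> * pmf (W j v x') z)"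

definition is_uniformity_tester ::
  "nat \<Rightarrow> real \<Rightarrow> nat \<Rightarrow> nat set list pmf \<Rightarrow> (nat \<Rightarrow> nat set list \<Rightarrow> nat \<Rightarrow> bool pmf)
     \<Rightarrow> (nat set list \<Rightarrow> (nat \<Rightarrow> bool) \<Rightarrow> bool pmf) \<Rightarrow> bool" where
  "is_uniformity_tester k \<gamma> n U W D \<longleftrightarrow>
     (\<forall>p. set_pmf p \<subseteq> {1..k} \<longrightarrow>
        (p = unif k \<longrightarrow> measure_pmf.prob (protocol_out n U W D p) {True} \<ge> 2/3) \<and>
        (dTV p (unif k) > \<gamma> \<longrightarrow> measure_pmf.prob (protocol_out n U W D p) {False} \<ge> 2/3))"

end

theory Submission
  imports Defs
begin

text \<open>Split the users into 24 groups; group \<open>g\<close> shares a uniformly random subset \<open>S\<^sub>g \<subseteq> [k]\<close> and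
  reports \<open>1{X \<in> S\<^sub>g}\<close> through randomized response. The count of ones in a group concentrates
  (Hoeffding) around an affine function of \<open>p(S\<^sub>g)\<close>, so the curator can estimate the bias
  \<open>p(S\<^sub>g) - |S\<^sub>g|/k\<close> up to \<open>\<gamma>/\<surd>(8k)\<close> and accepts iff all biases look small. Under the uniform
  distribution every bias is zero. If \<open>p\<close> is \<open>\<gamma>\<close>-far, then \<open>\<Sum>(p(x) - 1/k)\<^sup>2 > \<gamma>\<^sup>2/k\<close>; twice the bias of a
  random \<open>S\<close> is a Rademacher sum with these coefficients, and the moment bounds
  \<open>E Z\<^sup>4 \<le> 3 (E Z\<^sup>2)\<^sup>2\<close> and Paley--Zygmund show that each \<open>S\<^sub>g\<close> is detectably biased with
  probability at least \<open>1/12\<close>.\<close>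

section \<open>Rademacher sums over subsets\<close>

definition signed_sum :: "('a \<Rightarrow> real) \<Rightarrow> 'a set \<Rightarrow> 'a set \<Rightarrow> real" where
  "signed_sum d A S = (\<Sum>x\<in>A. if x \<in> S then d x else - d x)"

lemma signed_sum_insert_notin:
  assumes "finite A" "a \<notin> A" "S \<subseteq> A"
  shows "signed_sum d (insert a A) S = signed_sum d A S - d a"
  using assms by (auto simp: signed_sum_def)

lemma signed_sum_insert_in:
  assumes "finite A" "a \<notin> A" "S \<subseteq> A"
  shows "signed_sum d (insert a A) (insert a S) = signed_sum d A S + d a"
proof -
  have "signed_sum d A (insert a S) = signed_sum d A S"
    unfolding signed_sum_def using assms by (intro sum.cong) auto
  thus ?thesis using assms by (simp add: signed_sum_def)
qed

lemma signed_sum_eq_double_sum: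
  assumes "finite A" "S \<subseteq> A" "sum d A = 0"
  shows "signed_sum d A S = 2 * sum d S"
proof -
  have "signed_sum d A S = (\<Sum>x\<in>A. 2 * (if x \<in> S then d x else 0) - d x)"
    unfolding signed_sum_def by (intro sum.cong) auto
  also have "\<dots> = 2 * sum d S"
    using assms by (simp add: sum_subtractf sum_distrib_left[symmetric] sum.If_cases Int_absorb1 Int_commute)
  finally show ?thesis .
qed

lemma sum_Pow_insert:
  fixes f :: "'a set \<Rightarrow> 'b::comm_monoid_add"
  assumes "finite A" "a \<notin> A"
  shows "(\<Sum>S\<in>Pow (insert a A). f S) = (\<Sum>S\<in>Pow A. f S + f (insert a S))"
proof -
  have "Pow A \<inter> insert a ` Pow A = {}" "inj_on (insert a) (Pow A)"
    using assms by (auto simp: inj_on_def)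
  thus ?thesis using assms
    by (simp add: Pow_insert sum.union_disjoint sum.reindex sum.distrib)
qed

lemma sum_Pow_signed_sum_power2:
  assumes "finite A"
  shows "(\<Sum>S\<in>Pow A. (signed_sum d A S)^2) = 2 ^ card A * (\<Sum>x\<in>A. (d x)^2)"
  using assms
proof (induction A rule: finite_induct)
  case empty
  then show ?case by (simp add: signed_sum_def)
next
  case (insert a A)
  have "(\<Sum>S\<in>Pow (insert a A). (signed_sum d (insert a A) S)^2)
     = (\<Sum>S\<in>Pow A. (signed_sum d A S - d a)^2 + (signed_sum d A S + d a)^2)"
    using insert by (simp add: sum_Pow_insert signed_sum_insert_notin signed_sum_insert_in)
  also have "\<dots> = (\<Sum>S\<in>Pow A. 2 * (signed_sum d A S)^2 + 2 * (d a)^2)"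
    by (intro sum.cong) (auto simp: power2_eq_square algebra_simps)
  also have "\<dots> = 2 * (\<Sum>S\<in>Pow A. (signed_sum d A S)^2) + 2 * 2 ^ card A * (d a)^2"
    using insert.hyps by (simp add: sum.distrib sum_distrib_left[symmetric] card_Pow)
  finally show ?case using insert by (simp add: algebra_simps)
qed

lemma sum_Pow_signed_sum_power4_le:
  assumes "finite A"
  shows "(\<Sum>S\<in>Pow A. (signed_sum d A S)^4) \<le> 3 * 2 ^ card A * (\<Sum>x\<in>A. (d x)^2)^2"
  using assms
proof (induction A rule: finite_induct)
  case empty
  then show ?case by (simp add: signed_sum_def)
next
  case (insert a A)
  define s where "s = (\<Sum>x\<in>A. (d x)^2)"
  have "(\<Sum>S\<in>Pow (insert a A). (signed_sum d (insert a A) S)^4)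
     = (\<Sum>S\<in>Pow A. (signed_sum d A S - d a)^4 + (signed_sum d A S + d a)^4)"
    using insert by (simp add: sum_Pow_insert signed_sum_insert_notin signed_sum_insert_in)
  also have "\<dots> = (\<Sum>S\<in>Pow A. 2 * (signed_sum d A S)^4 + 12 * (d a)^2 * (signed_sum d A S)^2 + 2 * (d a)^4)"
    by (intro sum.cong) (auto simp: power_def algebra_simps)
  also have "\<dots> = 2 * (\<Sum>S\<in>Pow A. (signed_sum d A S)^4)
      + 12 * (d a)^2 * (\<Sum>S\<in>Pow A. (signed_sum d A S)^2) + 2 * 2 ^ card A * (d a)^4"
    using insert.hyps by (simp add: sum.distrib sum_distrib_left[symmetric] card_Pow)
  also have "\<dots> \<le> 2 * (3 * 2 ^ card A * s^2) + 12 * (d a)^2 * (2 ^ card A * s) + 2 * 2 ^ card A * (d a)^4"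
    using insert by (simp add: sum_Pow_signed_sum_power2 s_def)
  also have "\<dots> \<le> 3 * 2 ^ card (insert a A) * (s + (d a)^2)^2"
  proof -
    have "(0::real) \<le> 4 * 2 ^ card A * (d a)^4" by simp
    thus ?thesis using insert.hyps by (simp add: power2_eq_square power4_eq_xxxx algebra_simps)
  qed
  finally show ?case using insert by (simp add: s_def add.commute)
qed

lemma card_signed_sum_power2_ge:
  assumes "finite A" and s: "s = (\<Sum>x\<in>A. (d x)^2)" "0 < s"
  shows "2 ^ card A \<le> 12 * real (card {S\<in>Pow A. s / 2 \<le> (signed_sum d A S)^2})"
proof -
  define G where "G = {S\<in>Pow A. s / 2 \<le> (signed_sum d A S)^2}"
  \<comment> \<open>with \<open>Z = signed_sum d A S\<close>: on \<open>G\<close> use \<open>Z\<^sup>2 \<le> 3s + Z\<^sup>4/(12s)\<close> (AM-GM), off \<open>G\<close> use \<open>Z\<^sup>2 < s/2\<close>; then sum the two moments\<close>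
  have pointwise: "(signed_sum d A S)^2 \<le> s / 2 + 3 * s * of_bool (S \<in> G) + (signed_sum d A S)^4 / (12 * s)"
    if "S \<in> Pow A" for S
  proof (cases "S \<in> G")
    case True
    have "0 \<le> ((signed_sum d A S)^2 - 6 * s)^2 / (12 * s)" using s by simp
    hence "(signed_sum d A S)^2 \<le> 3 * s + (signed_sum d A S)^4 / (12 * s)"
      using s by (simp add: field_simps power2_eq_square power4_eq_xxxx)
    then show ?thesis using True s by simp
  next
    case False
    then show ?thesis using that s by (auto simp: G_def intro: add_increasing2)
  qed
  have "2 ^ card A * s = (\<Sum>S\<in>Pow A. (signed_sum d A S)^2)"
    using sum_Pow_signed_sum_power2[OF assms(1)] s by simp
  also have "\<dots> \<le> (\<Sum>S\<in>Pow A. s / 2 + 3 * s * of_bool (S \<in> G) + (signed_sum d A S)^4 / (12 * s))"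
    by (intro sum_mono pointwise)
  also have "\<dots> = 2 ^ card A * s / 2 + 3 * s * card G + (\<Sum>S\<in>Pow A. (signed_sum d A S)^4) / (12 * s)"
    using assms(1) by (simp add: sum.distrib sum_distrib_left[symmetric] sum_divide_distrib[symmetric]
        card_Pow G_def Int_def)
  also have "\<dots> \<le> 2 ^ card A * s / 2 + 3 * s * card G + (3 * 2 ^ card A * s^2) / (12 * s)"
  proof -
    have "(\<Sum>S\<in>Pow A. (signed_sum d A S)^4) \<le> 3 * 2 ^ card A * s^2"
      using sum_Pow_signed_sum_power4_le[OF assms(1), of d] s(1) by simp
    hence "(\<Sum>S\<in>Pow A. (signed_sum d A S)^4) / (12 * s) \<le> (3 * 2 ^ card A * s^2) / (12 * s)"
      using s(2) by (intro divide_right_mono) auto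
    thus ?thesis by linarith
  qed
  finally have "2 ^ card A * s \<le> 12 * s * card G"
    using s by (simp add: power2_eq_square field_simps)
  thus ?thesis using s by (simp add: G_def mult.commute mult.left_commute)
qed

section \<open>Far distributions have many biased subsets\<close>

lemma dTV_gt_imp_sum_power2_gt:
  fixes p :: "nat pmf"
  assumes sp: "set_pmf p \<subseteq> {1..k}" and far: "\<gamma> < dTV p (unif k)" and "0 < \<gamma>"
  shows "\<gamma>^2 / k < (\<Sum>x\<in>{1..k}. (pmf p x - 1/k)^2)"
proof -
  have k: "k \<ge> 1" using sp set_pmf_not_empty[of p] by fastforce
  have "bdd_above (range (\<lambda>S. measure_pmf.prob p S - measure_pmf.prob (unif k) S))"
    by (intro bdd_aboveI[where M=1]) (auto simp: diff_le_eq intro: add_mono[OF measure_pmf.prob_le_1 measure_nonneg, simplified])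
  with far obtain S where S: "\<gamma> < measure_pmf.prob p S - measure_pmf.prob (unif k) S"
    unfolding dTV_def by (auto simp: less_cSUP_iff)
  define B where "B = S \<inter> {1..k}"
  have "measure_pmf.prob p S = measure_pmf.prob p B"
    using sp by (intro measure_eq_AE) (auto simp: AE_measure_pmf_iff B_def)
  also have "\<dots> = (\<Sum>x\<in>B. pmf p x)" by (simp add: measure_measure_pmf_finite B_def)
  finally have "\<gamma> < (\<Sum>x\<in>B. pmf p x - 1/k)"
    using S k by (simp add: sum_subtractf unif_def measure_pmf_of_set B_def Int_commute)
  hence "\<gamma>^2 < (\<Sum>x\<in>B. pmf p x - 1/k)^2" using assms(3) by (intro power_strict_mono) auto
  also have "\<dots> \<le> (\<Sum>x\<in>B. (pmf p x - 1/k)^2) * card B" by (rule sum_squared_le_sum_of_squares)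
  also have "\<dots> \<le> (\<Sum>x\<in>{1..k}. (pmf p x - 1/k)^2) * k"
  proof (rule mult_mono)
    have "card B \<le> card {1..k}" by (rule card_mono) (auto simp: B_def)
    thus "real (card B) \<le> real k" by simp
  qed (auto intro: sum_mono2 sum_nonneg simp: B_def)
  finally show ?thesis using k by (simp add: field_simps)
qed

lemma card_biased_subsets_ge:
  fixes p :: "nat pmf"
  assumes sp: "set_pmf p \<subseteq> {1..k}" and "\<gamma> < dTV p (unif k)" and "0 < \<gamma>"
  shows "2 ^ k \<le> 12 * real (card {S\<in>Pow {1..k}. \<gamma> / sqrt (8 * real k) \<le> \<bar>measure_pmf.prob p S - card S / k\<bar>})"
proof -
  have k: "k \<ge> 1" using sp set_pmf_not_empty[of p] by fastforce
  define d where "d x = pmf p x - 1 / k" for x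
  define s where "s = (\<Sum>x\<in>{1..k}. (d x)^2)"
  have s: "\<gamma>^2 / k < s" using dTV_gt_imp_sum_power2_gt[OF assms] by (simp add: s_def d_def)
  have "0 < \<gamma>^2 / k" using \<open>0 < \<gamma>\<close> k by simp
  hence "0 < s" using s by linarith
  have d0: "sum d {1..k} = 0" using sum_pmf_eq_1[OF _ sp] k by (simp add: d_def sum_subtractf)
  have "{S\<in>Pow {1..k}. s / 2 \<le> (signed_sum d {1..k} S)^2}
     \<subseteq> {S\<in>Pow {1..k}. \<gamma> / sqrt (8 * real k) \<le> \<bar>measure_pmf.prob p S - card S / k\<bar>}"
  proof safe
    fix S assume S: "S \<subseteq> {1..k}" "s / 2 \<le> (signed_sum d {1..k} S)^2"
    have "measure_pmf.prob p S - card S / k = sum d S"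
      using finite_subset[OF S(1)] by (simp add: measure_measure_pmf_finite d_def sum_subtractf)
    moreover have "(\<gamma> / sqrt (8 * real k))^2 < \<bar>sum d S\<bar>^2"
    proof -
      have "\<gamma>^2 / k < 8 * (sum d S)^2"
        using S(2) s signed_sum_eq_double_sum[OF _ S(1) d0] by (simp add: power_mult_distrib)
      thus ?thesis by (simp add: power_divide field_simps)
    qed
    ultimately show "\<gamma> / sqrt (8 * real k) \<le> \<bar>measure_pmf.prob p S - card S / k\<bar>"
      by (metis abs_ge_zero less_imp_le power_less_imp_less_base)
  qed
  hence "card {S\<in>Pow {1..k}. s / 2 \<le> (signed_sum d {1..k} S)^2}
     \<le> card {S\<in>Pow {1..k}. \<gamma> / sqrt (8 * real k) \<le> \<bar>measure_pmf.prob p S - card S / k\<bar>}"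
    by (intro card_mono) auto
  thus ?thesis using card_signed_sum_power2_ge[OF _ s_def \<open>0 < s\<close>] by simp
qed

section \<open>Randomized response\<close>

definition rr_bit :: "real \<Rightarrow> 'a set \<Rightarrow> 'a \<Rightarrow> bool pmf" where
  "rr_bit r S x = bernoulli_pmf (if x \<in> S then 1 - r else r)"

lemma rr_bit_LDP:
  assumes "0 \<le> \<epsilon>"
  shows "pmf (rr_bit (1 / (1 + exp \<epsilon>)) S x) z \<le> exp \<epsilon> * pmf (rr_bit (1 / (1 + exp \<epsilon>)) S x') z"
proof -
  define r where "r = 1 / (1 + exp \<epsilon>)"
  have "1 \<le> exp \<epsilon>" "0 < 1 + exp \<epsilon>" using assms by (simp_all add: add_pos_pos)
  hence r: "0 < r" "r \<le> 1 - r" "1 - r = exp \<epsilon> * r"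
    by (auto simp: r_def field_simps)
  have "r \<le> exp \<epsilon> * r" using r \<open>1 \<le> exp \<epsilon>\<close> by simp
  moreover have "pmf (rr_bit r S y) z \<in> {r, 1 - r}" for y
  proof -
    have "r \<le> 1" using r by linarith
    thus ?thesis using r(1) by (cases z) (auto simp: rr_bit_def)
  qed
  ultimately have bounds: "r \<le> pmf (rr_bit r S y) z \<and> pmf (rr_bit r S y) z \<le> exp \<epsilon> * r" for y
    using r by (metis insertE singletonD order_refl)
  have "pmf (rr_bit r S x) z \<le> exp \<epsilon> * r" using bounds by blast
  also have "\<dots> \<le> exp \<epsilon> * pmf (rr_bit r S x') z" using bounds by (intro mult_left_mono) auto
  finally show ?thesis by (simp add: r_def)
qed

lemma pmf_bind_rr_bit_True:
  assumes "0 \<le> r" "r \<le> 1"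
  shows "pmf (p \<bind> rr_bit r S) True = r + (1 - 2 * r) * measure_pmf.prob p S"
proof -
  have "pmf (p \<bind> rr_bit r S) True = measure_pmf.expectation p (\<lambda>x. r + (1 - 2 * r) * indicator S x)"
    unfolding pmf_bind using assms by (intro Bochner_Integration.integral_cong) (auto simp: rr_bit_def)
  also have "\<dots> = r + (1 - 2 * r) * measure_pmf.prob p S"
  proof -
    have "integrable (measure_pmf p) (indicator S :: _ \<Rightarrow> real)"
      by (rule measure_pmf.integrable_const_bound[where B=1]) auto
    thus ?thesis by (simp add: measure_pmf.prob_space)
  qed
  finally show ?thesis .
qed

lemma randomized_response_gap_ge:
  fixes \<epsilon> :: real
  assumes "0 \<le> \<epsilon>" "\<epsilon> \<le> 1"
  shows "\<epsilon> / 4 \<le> 1 - 2 * (1 / (1 + exp \<epsilon>))"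
proof -
  have "exp \<epsilon> \<le> exp 1" using assms(2) by simp
  hence "exp \<epsilon> \<le> 3" using exp_le by linarith
  hence "\<epsilon> * (1 + exp \<epsilon>) \<le> \<epsilon> * 4" using assms(1) by (intro mult_left_mono) auto
  also have "\<dots> \<le> 4 * (exp \<epsilon> - 1)" using exp_ge_add_one_self[of \<epsilon>] by argo
  finally have "\<epsilon> * (1 + exp \<epsilon>) \<le> 4 * (exp \<epsilon> - 1)" .
  moreover have "0 < 1 + exp \<epsilon>" by (simp add: add_pos_pos)
  ultimately show ?thesis by (simp add: field_simps)
qed

section \<open>The grouped counting protocol\<close>

definition messages :: "nat \<Rightarrow> (nat \<Rightarrow> 'v \<Rightarrow> 'a \<Rightarrow> bool pmf) \<Rightarrow> 'v \<Rightarrow> 'a pmf \<Rightarrow> (nat \<Rightarrow> bool) pmf" where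
  "messages n W v p = Pi_pmf {..<n} False (\<lambda>j. p \<bind> W j v)"

lemma Pi_pmf_count_Hoeffding:
  fixes q :: "nat \<Rightarrow> bool pmf"
  assumes "finite I" "G \<subseteq> I" "G \<noteq> {}" "0 \<le> t"
  shows "measure_pmf.prob (Pi_pmf I False q)
     {zs. t \<le> \<bar>(\<Sum>j\<in>G. if zs j then 1 else 0) - (\<Sum>j\<in>G. pmf (q j) True)\<bar>}
     \<le> 2 * exp (-2 * t^2 / card G)"
proof -
  have finG: "finite G" using assms finite_subset by blast
  have mean: "measure_pmf.expectation (Pi_pmf I False q) (\<lambda>f. if f j then 1 else 0::real) = pmf (q j) True"
    if "j \<in> G" for j
  proof -
    have "measure_pmf.expectation (Pi_pmf I False q) (\<lambda>f. if f j then 1 else 0::real)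
        = measure_pmf.expectation (map_pmf (\<lambda>f. f j) (Pi_pmf I False q)) (\<lambda>b. if b then 1 else 0::real)"
      by simp
    also have "map_pmf (\<lambda>f. f j) (Pi_pmf I False q) = q j"
      using assms that by (subst Pi_pmf_component) auto
    also have "measure_pmf.expectation (q j) (\<lambda>b. if b then 1 else 0::real) = pmf (q j) True"
      by (subst integral_measure_pmf_real[where A=UNIV]) (auto simp: UNIV_bool)
    finally show ?thesis .
  qed
  interpret Hoeffding_ineq "measure_pmf (Pi_pmf I False q)" G "\<lambda>j f. if f j then 1 else 0"
     "\<lambda>_. 0" "\<lambda>_. 1" "\<Sum>j\<in>G. pmf (q j) True"
  proof unfold_locales
    show "prob_space.indep_vars (measure_pmf (Pi_pmf I False q)) (\<lambda>_. borel) (\<lambda>j f. if f j then 1 else 0::real) G"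
      by (intro prob_space.indep_vars_compose2[OF _ prob_space.indep_vars_subset[OF _ indep_vars_Pi_pmf]])
         (use assms in \<open>auto simp: measure_pmf.prob_space_axioms\<close>)
    show "(\<Sum>j\<in>G. pmf (q j) True) \<equiv> (\<Sum>j\<in>G. measure_pmf.expectation (Pi_pmf I False q) (\<lambda>f. if f j then 1 else 0))"
      using mean by simp
  qed (auto simp: finG)
  have "measure_pmf.prob (Pi_pmf I False q)
     {zs \<in> space (measure_pmf (Pi_pmf I False q)). t \<le> \<bar>(\<Sum>j\<in>G. if zs j then 1 else 0) - (\<Sum>j\<in>G. pmf (q j) True)\<bar>}
     \<le> 2 * exp (-2 * t^2 / (\<Sum>j\<in>G. (1 - 0)^2))"
    by (rule Hoeffding_ineq_abs_ge) (use assms finG in \<open>auto simp: card_gt_0_iff\<close>)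
  thus ?thesis by simp
qed

lemma pmf_protocol_out_pmf_of_set:
  assumes "finite V" "V \<noteq> {}"
  shows "pmf (protocol_out n (pmf_of_set V) W (\<lambda>v zs. return_pmf (T v zs)) p) True
       = (\<Sum>v\<in>V. measure_pmf.prob (messages n W v p) {zs. T v zs}) / card V"
proof -
  have "protocol_out n (pmf_of_set V) W (\<lambda>v zs. return_pmf (T v zs)) p
      = pmf_of_set V \<bind> (\<lambda>v. map_pmf (T v) (messages n W v p))"
    unfolding protocol_out_def messages_def
    by (intro bind_pmf_cong refl) (simp add: map_pmf_def bind_assoc_pmf Pi_pmf_bind[where d'=0])
  hence "pmf (protocol_out n (pmf_of_set V) W (\<lambda>v zs. return_pmf (T v zs)) p) True
      = (\<Sum>v\<in>V. pmf (map_pmf (T v) (messages n W v p)) True) / card V"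
    using assms by (simp add: pmf_bind integral_pmf_of_set)
  thus ?thesis by (simp add: pmf_map vimage_def)
qed

definition subset_lists :: "nat \<Rightarrow> nat \<Rightarrow> nat set list set" where
  "subset_lists k m = {vs. set vs \<subseteq> Pow {1..k} \<and> length vs = m}"

text \<open>User \<open>j\<close> belongs to group \<open>j div L\<close>; users beyond the last group read an out-of-range,
  unspecified list entry, and the curator ignores their bits.\<close>
definition group_channels :: "real \<Rightarrow> nat \<Rightarrow> nat \<Rightarrow> nat set list \<Rightarrow> nat \<Rightarrow> bool pmf" where
  "group_channels r L j vs = rr_bit r (vs ! (j div L))"

definition group_count :: "nat \<Rightarrow> nat \<Rightarrow> (nat \<Rightarrow> bool) \<Rightarrow> real" where
  "group_count L g zs = (\<Sum>j\<in>{g * L..<Suc g * L}. if zs j then 1 else 0)"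

definition count_test :: "nat \<Rightarrow> real \<Rightarrow> nat \<Rightarrow> real \<Rightarrow> nat set list \<Rightarrow> (nat \<Rightarrow> bool) \<Rightarrow> bool" where
  "count_test k r L t vs zs \<longleftrightarrow>
     (\<forall>g<length vs. \<bar>group_count L g zs - L * (r + (1 - 2 * r) * (card (vs ! g) / k))\<bar> \<le> t)"

lemma group_channels_LDP:
  assumes "0 \<le> \<epsilon>"
  shows "is_LDP \<epsilon> k n (group_channels (1 / (1 + exp \<epsilon>)) L)"
  using rr_bit_LDP[OF assms] by (auto simp: is_LDP_def group_channels_def)

lemma finite_subset_lists: "finite (subset_lists k m)"
  unfolding subset_lists_def by (intro finite_lists_length_eq) auto

lemma subset_lists_nonempty: "subset_lists k m \<noteq> {}"
proof -
  have "replicate m {} \<in> subset_lists k m" by (auto simp: subset_lists_def set_replicate_conv_if)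
  thus ?thesis by blast
qed

lemma card_subset_lists: "card (subset_lists k m) = 2 ^ (k * m)"
  unfolding subset_lists_def by (simp add: card_lists_length_eq card_Pow power_mult)

lemma card_lists_avoiding_le:
  assumes "G \<subseteq> Pow {1..k}" "2 ^ k \<le> 12 * real (card G)"
  shows "card {vs. set vs \<subseteq> Pow {1..k} - G \<and> length vs = m} / card (subset_lists k m) \<le> (11/12)^m"
proof -
  have "card G \<le> 2 ^ k"
    using card_mono[OF _ assms(1)] by (simp add: card_Pow)
  hence "real (card (Pow {1..k} - G)) = 2 ^ k - real (card G)"
    using assms(1) by (simp add: card_Diff_subset card_Pow finite_subset of_nat_diff)
  hence "real (card (Pow {1..k} - G)) \<le> 11/12 * 2 ^ k" using assms(2) by linarith
  thus ?thesis
    by (simp add: card_lists_length_eq card_subset_lists power_mult power_divide[symmetric]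
        divide_le_eq power_mono)
qed

lemma group_count_deviation:
  assumes "0 \<le> r" "r \<le> 1" "Suc g * L \<le> n" "0 < L" "0 \<le> t"
  shows "measure_pmf.prob (messages n (group_channels r L) vs p)
           {zs. t \<le> \<bar>group_count L g zs - L * (r + (1 - 2 * r) * measure_pmf.prob p (vs ! g))\<bar>}
         \<le> 2 * exp (-2 * t^2 / L)"
proof -
  define G where "G = {g * L..<Suc g * L}"
  have "j div L = g" if "j \<in> G" for j
    using that by (intro div_nat_eqI) (auto simp: G_def mult.commute)
  hence "(\<Sum>j\<in>G. pmf (p \<bind> group_channels r L j vs) True)
       = L * (r + (1 - 2 * r) * measure_pmf.prob p (vs ! g))"
    using assms by (simp add: group_channels_def pmf_bind_rr_bit_True G_def)
  moreover have "G \<subseteq> {..<n}" "G \<noteq> {}" "card G = L"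
    using assms by (auto simp: G_def)
  ultimately show ?thesis
    using Pi_pmf_count_Hoeffding[of "{..<n}" G t "\<lambda>j. p \<bind> group_channels r L j vs"] assms
    by (simp add: messages_def group_count_def G_def)
qed

lemma count_test_accepts_uniform:
  assumes "1 \<le> k" "0 < L" "length vs * L \<le> n" "set vs \<subseteq> Pow {1..k}" "0 \<le> r" "r \<le> 1" "0 \<le> t"
  shows "1 - length vs * (2 * exp (-2 * t^2 / L))
           \<le> measure_pmf.prob (messages n (group_channels r L) vs (unif k)) {zs. count_test k r L t vs zs}"
proof -
  let ?M = "messages n (group_channels r L) vs (unif k)"
  define dev where "dev g = {zs. t \<le> \<bar>group_count L g zs - L * (r + (1 - 2 * r) * measure_pmf.prob (unif k) (vs ! g))\<bar>}" for g
  have "measure_pmf.prob (unif k) (vs ! g) = card (vs ! g) / k" if "g < length vs" for g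
  proof -
    have "{1..k} \<inter> vs ! g = vs ! g" using assms(4) nth_mem[OF that] by blast
    thus ?thesis using assms(1) by (simp add: unif_def measure_pmf_of_set)
  qed
  hence "- {zs. count_test k r L t vs zs} \<subseteq> (\<Union>g<length vs. dev g)"
    by (auto simp: count_test_def dev_def not_le intro: less_imp_le)
  hence "measure_pmf.prob ?M (- {zs. count_test k r L t vs zs}) \<le> (\<Sum>g<length vs. measure_pmf.prob ?M (dev g))"
    by (metis measure_pmf.finite_measure_mono measure_pmf.finite_measure_subadditive_finite
        finite_lessThan sets_measure_pmf UNIV_I subset_UNIV order_trans)
  also have "\<dots> \<le> (\<Sum>g<length vs. 2 * exp (-2 * t^2 / L))"
  proof (intro sum_mono)
    fix g assume "g \<in> {..<length vs}"
    hence "Suc g * L \<le> n" using assms(3) by (meson lessThan_iff Suc_leI mult_le_mono1 order_trans)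
    thus "measure_pmf.prob ?M (dev g) \<le> 2 * exp (-2 * t^2 / L)"
      unfolding dev_def using assms by (intro group_count_deviation) auto
  qed
  finally have "measure_pmf.prob ?M (- {zs. count_test k r L t vs zs}) \<le> length vs * (2 * exp (-2 * t^2 / L))"
    by simp
  moreover have "measure_pmf.prob ?M (- {zs. count_test k r L t vs zs}) = 1 - measure_pmf.prob ?M {zs. count_test k r L t vs zs}"
    using measure_pmf.prob_compl[of "{zs. count_test k r L t vs zs}" ?M] by (simp add: Compl_eq_Diff_UNIV)
  ultimately show ?thesis by simp
qed

lemma count_test_rejects_biased:
  assumes "g < length vs" "length vs * L \<le> n" "0 < L" "0 \<le> r" "r \<le> 1" "0 \<le> t"
    and biased: "2 * t \<le> \<bar>L * (1 - 2 * r) * (measure_pmf.prob p (vs ! g) - card (vs ! g) / k)\<bar>"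
  shows "measure_pmf.prob (messages n (group_channels r L) vs p) {zs. count_test k r L t vs zs}
           \<le> 2 * exp (-2 * t^2 / L)"
proof -
  let ?M = "messages n (group_channels r L) vs p"
  have "{zs. count_test k r L t vs zs}
     \<subseteq> {zs. t \<le> \<bar>group_count L g zs - L * (r + (1 - 2 * r) * measure_pmf.prob p (vs ! g))\<bar>}"
  proof safe
    fix zs
    define a where "a = group_count L g zs"
    define b where "b = L * (r + (1 - 2 * r) * (card (vs ! g) / k))"
    define b' where "b' = L * (r + (1 - 2 * r) * measure_pmf.prob p (vs ! g))"
    assume "count_test k r L t vs zs"
    hence "\<bar>a - b\<bar> \<le> t" using assms(1) by (simp add: count_test_def a_def b_def)
    moreover have "b' - b = L * (1 - 2 * r) * (measure_pmf.prob p (vs ! g) - card (vs ! g) / k)"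
      by (simp add: b_def b'_def divide_inverse algebra_simps)
    hence "2 * t \<le> \<bar>b' - b\<bar>" using biased by simp
    moreover have "\<bar>b' - b\<bar> \<le> \<bar>a - b'\<bar> + \<bar>a - b\<bar>" by linarith
    ultimately show "t \<le> \<bar>group_count L g zs - b'\<bar>" unfolding a_def by linarith
  qed
  hence "measure_pmf.prob ?M {zs. count_test k r L t vs zs}
     \<le> measure_pmf.prob ?M {zs. t \<le> \<bar>group_count L g zs - L * (r + (1 - 2 * r) * measure_pmf.prob p (vs ! g))\<bar>}"
    by (intro measure_pmf.finite_measure_mono) auto
  also have "\<dots> \<le> 2 * exp (-2 * t^2 / L)"
  proof (rule group_count_deviation)
    show "Suc g * L \<le> n" using assms(1,2) by (meson Suc_leI mult_le_mono1 order_trans)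
  qed (use assms in auto)
  finally show ?thesis .
qed

lemma group_protocol_accepts_uniform:
  assumes "1 \<le> k" "0 < L" "m * L \<le> n" "0 \<le> r" "r \<le> 1" "0 \<le> t"
  shows "1 - m * (2 * exp (-2 * t^2 / L))
           \<le> pmf (protocol_out n (pmf_of_set (subset_lists k m)) (group_channels r L)
                   (\<lambda>vs zs. return_pmf (count_test k r L t vs zs)) (unif k)) True"
proof -
  let ?acc = "\<lambda>vs. measure_pmf.prob (messages n (group_channels r L) vs (unif k)) {zs. count_test k r L t vs zs}"
  have "1 - m * (2 * exp (-2 * t^2 / L)) \<le> ?acc vs" if "vs \<in> subset_lists k m" for vs
  proof -
    have "set vs \<subseteq> Pow {1..k}" "length vs = m" using that by (auto simp: subset_lists_def)
    thus ?thesis using count_test_accepts_uniform[of k L vs n r t] assms by simp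
  qed
  hence "(\<Sum>vs\<in>subset_lists k m. 1 - m * (2 * exp (-2 * t^2 / L))) \<le> (\<Sum>vs\<in>subset_lists k m. ?acc vs)"
    by (rule sum_mono)
  thus ?thesis using finite_subset_lists subset_lists_nonempty
    by (simp add: pmf_protocol_out_pmf_of_set card_gt_0_iff pos_le_divide_eq mult.commute)
qed

text \<open>The curator errs on a far \<open>p\<close> only if none of the \<open>m\<close> shared subsets is biased (probability
  at most \<open>(11/12)^m\<close>) or if the count of a biased group lands near its uniform value.\<close>
lemma group_protocol_accepts_far:
  fixes p :: "nat pmf"
  assumes "set_pmf p \<subseteq> {1..k}" and "\<gamma> < dTV p (unif k)" and "0 < \<gamma>"
    and "0 < L" "m * L \<le> n" "0 \<le> r" "r \<le> 1 / 2" and t: "t = L * (1 - 2 * r) * (\<gamma> / sqrt (8 * real k)) / 2"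
  shows "pmf (protocol_out n (pmf_of_set (subset_lists k m)) (group_channels r L)
                (\<lambda>vs zs. return_pmf (count_test k r L t vs zs)) p) True
           \<le> (11/12)^m + 2 * exp (-2 * t^2 / L)"
proof -
  define \<delta> where "\<delta> = 2 * exp (-2 * t^2 / L)"
  define V where "V = subset_lists k m"
  define Good where "Good = {S\<in>Pow {1..k}. \<gamma> / sqrt (8 * real k) \<le> \<bar>measure_pmf.prob p S - card S / k\<bar>}"
  define Bad where "Bad = {vs. set vs \<subseteq> Pow {1..k} - Good \<and> length vs = m}"
  let ?acc = "\<lambda>vs. measure_pmf.prob (messages n (group_channels r L) vs p) {zs. count_test k r L t vs zs}"
  have "0 \<le> t" using assms by simp
  have "Bad \<subseteq> V" by (auto simp: Bad_def V_def subset_lists_def)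
  have acc_le: "?acc vs \<le> of_bool (vs \<in> Bad) + \<delta>" if "vs \<in> V" for vs
  proof (cases "vs \<in> Bad")
    case False
    have "set vs \<subseteq> Pow {1..k}" "length vs = m" using that by (auto simp: V_def subset_lists_def)
    with False obtain S where "S \<in> set vs" "S \<in> Good" by (auto simp: Bad_def)
    then obtain g where g: "g < length vs" "vs ! g \<in> Good" by (auto simp: in_set_conv_nth)
    have "2 * t = L * (1 - 2 * r) * (\<gamma> / sqrt (8 * real k))" by (simp add: t)
    also have "\<dots> \<le> L * (1 - 2 * r) * \<bar>measure_pmf.prob p (vs ! g) - card (vs ! g) / k\<bar>"
      using g(2) assms by (intro mult_left_mono) (auto simp: Good_def)
    finally have "?acc vs \<le> \<delta>" unfolding \<delta>_def using g(1) that assms \<open>0 \<le> t\<close>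
      by (intro count_test_rejects_biased) (auto simp: V_def subset_lists_def abs_mult)
    thus ?thesis by simp
  qed (simp add: \<delta>_def add_increasing2)
  have "2 ^ k \<le> 12 * real (card Good)" using card_biased_subsets_ge[OF assms(1-3)] by (simp add: Good_def)
  hence ratio: "card Bad / card V \<le> (11/12)^m"
    unfolding Bad_def V_def by (intro card_lists_avoiding_le) (auto simp: Good_def)
  moreover have "(\<Sum>vs\<in>V. ?acc vs) \<le> (\<Sum>vs\<in>V. of_bool (vs \<in> Bad) + \<delta>)"
    by (rule sum_mono) (rule acc_le)
  moreover have "V \<inter> {vs. vs \<in> Bad} = Bad" using \<open>Bad \<subseteq> V\<close> by blast
  ultimately have sum_le: "(\<Sum>vs\<in>V. ?acc vs) \<le> card Bad + card V * \<delta>"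
    using finite_subset_lists by (simp add: V_def sum.distrib)
  have "0 < card V" using finite_subset_lists subset_lists_nonempty by (simp add: V_def card_gt_0_iff)
  have "pmf (protocol_out n (pmf_of_set V) (group_channels r L)
              (\<lambda>vs zs. return_pmf (count_test k r L t vs zs)) p) True = (\<Sum>vs\<in>V. ?acc vs) / card V"
    unfolding V_def by (rule pmf_protocol_out_pmf_of_set[OF finite_subset_lists subset_lists_nonempty])
  also have "\<dots> \<le> (card Bad + card V * \<delta>) / card V" by (rule divide_right_mono[OF sum_le]) simp
  also have "\<dots> = card Bad / card V + \<delta>" using \<open>0 < card V\<close> by (simp add: add_divide_distrib)
  also have "\<dots> \<le> (11/12)^m + \<delta>" using ratio by simp
  finally show ?thesis by (simp add: \<delta>_def V_def)
qed

lemma group_protocol_uniformity_tester: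
  assumes "0 < \<gamma>" "0 < L" "m * L \<le> n" "0 \<le> r" "r \<le> 1 / 2"
    and t: "t = L * (1 - 2 * r) * (\<gamma> / sqrt (8 * real k)) / 2"
    and "m * (2 * exp (-2 * t^2 / L)) \<le> 1 / 3"
    and sound: "(11/12)^m + 2 * exp (-2 * t^2 / L) \<le> 1 / 3"
  shows "is_uniformity_tester k \<gamma> n (pmf_of_set (subset_lists k m)) (group_channels r L)
           (\<lambda>vs zs. return_pmf (count_test k r L t vs zs))"
  unfolding is_uniformity_tester_def
proof (intro allI impI conjI)
  fix p :: "nat pmf"
  assume sp: "set_pmf p \<subseteq> {1..k}"
  have "0 \<le> t" using assms by simp
  show "2/3 \<le> measure_pmf.prob (protocol_out n (pmf_of_set (subset_lists k m)) (group_channels r L)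
                 (\<lambda>vs zs. return_pmf (count_test k r L t vs zs)) p) {True}" if "p = unif k"
  proof -
    have "1 \<le> k" using sp set_pmf_not_empty[of p] by fastforce
    thus ?thesis using group_protocol_accepts_uniform[of k L m n r t] assms \<open>0 \<le> t\<close> that
      by (simp add: measure_pmf_single)
  qed
  show "2/3 \<le> measure_pmf.prob (protocol_out n (pmf_of_set (subset_lists k m)) (group_channels r L)
                 (\<lambda>vs zs. return_pmf (count_test k r L t vs zs)) p) {False}" if "\<gamma> < dTV p (unif k)"
    using group_protocol_accepts_far[OF sp that assms(1-6)] sound
    by (simp add: measure_pmf_single pmf_False_conv_True)
qed

text \<open>With \<open>L \<ge> n/48\<close> and \<open>1 - 2r \<ge> \<epsilon>/4\<close>, the Hoeffding exponent \<open>2t\<^sup>2/L = L(1 - 2r)\<^sup>2\<gamma>\<^sup>2/(16k)\<close>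
  is at least \<open>n\<gamma>\<^sup>2\<epsilon>\<^sup>2/(12288 k) \<ge> 143\<close>.\<close>
lemma sample_size_imp_small_deviation_bound:
  fixes \<gamma> \<epsilon> r t :: real and k n L :: nat
  assumes "1 \<le> k" "0 < \<gamma>" "\<gamma> \<le> 1" "0 < \<epsilon>" "\<epsilon> \<le> 1"
    and n: "2000000 * real k / (\<gamma>^2 * \<epsilon>^2) \<le> real n"
    and L: "L = n div 24" and r: "r = 1 / (1 + exp \<epsilon>)"
    and t: "t = L * (1 - 2 * r) * (\<gamma> / sqrt (8 * real k)) / 2"
  shows "0 < L" "2 * exp (-2 * t^2 / L) \<le> 1 / 72"
proof -
  have nk: "2000000 * real k \<le> real n * (\<gamma>^2 * \<epsilon>^2)"
    using n assms(2,4) by (simp add: pos_divide_le_eq)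
  have "\<gamma>^2 * \<epsilon>^2 \<le> 1"
    using assms(2-5) by (simp add: mult_le_one power_le_one)
  hence "real n * (\<gamma>^2 * \<epsilon>^2) \<le> real n" by (simp add: mult_left_le)
  hence "2000000 \<le> real n" using nk assms(1) by linarith
  moreover have "real n < 24 * (real L + 1)"
  proof -
    have "n < 24 * Suc L" unfolding L using dividend_less_times_div[of 24 n] by simp
    hence "real n < real (24 * Suc L)" by (simp only: of_nat_less_iff)
    thus ?thesis by simp
  qed
  ultimately have L48: "real n / 48 \<le> L" by argo
  thus "0 < L" using \<open>2000000 \<le> real n\<close> by simp
  have c: "\<epsilon>^2 / 16 \<le> (1 - 2 * r)^2"
    using power_mono[OF randomized_response_gap_ge[of \<epsilon>], of 2] assms(4,5)
    by (simp add: r power_divide)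
  have "143 \<le> real n * (\<gamma>^2 * \<epsilon>^2) / (12288 * k)"
    using nk assms(1) by (simp add: pos_le_divide_eq)
  also have "\<dots> = (real n / 48) * (\<epsilon>^2 / 16) * (\<gamma>^2 / (8 * k)) / 2"
    using assms(1) by (simp add: field_simps)
  also have "\<dots> \<le> L * (1 - 2 * r)^2 * (\<gamma>^2 / (8 * k)) / 2"
    using L48 c by (intro divide_right_mono mult_right_mono mult_mono) auto
  also have "\<dots> = 2 * t^2 / L"
  proof -
    have "t^2 = L^2 * (1 - 2 * r)^2 * (\<gamma>^2 / (8 * k)) / 4"
      by (simp add: t power_mult_distrib power_divide)
    thus ?thesis using \<open>0 < L\<close> by (simp add: power2_eq_square)
  qed
  finally have "exp (-2 * t^2 / L) \<le> exp (-143)" by simp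
  also have "exp (-143 :: real) \<le> 1 / 144"
    using exp_ge_add_one_self[of "143::real"] by (simp add: exp_minus field_simps)
  finally show "2 * exp (-2 * t^2 / L) \<le> 1 / 72" by simp
qed

text \<open>The shared subsets are uniform over all of \<open>Pow [k]\<close> rather than over sets of size \<open>k/2\<close>.\<close>
theorem theorem4p2:
  shows "\<exists>C>0. \<forall>(k::nat) (\<gamma>::real) (\<epsilon>::real) (n::nat).
           k \<ge> 2 \<and> even k \<and> 0 < \<gamma> \<and> \<gamma> \<le> 1 \<and> 0 < \<epsilon> \<and> \<epsilon> \<le> 1 \<and>
           real n \<ge> C * real k / (\<gamma>^2 * \<epsilon>^2) \<longrightarrow>
           (\<exists>U W D. is_LDP \<epsilon> k n W \<and> is_uniformity_tester k \<gamma> n U W D)"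
proof (intro exI[of _ 2000000] conjI allI impI)
  fix k n :: nat and \<gamma> \<epsilon> :: real
  assume "k \<ge> 2 \<and> even k \<and> 0 < \<gamma> \<and> \<gamma> \<le> 1 \<and> 0 < \<epsilon> \<and> \<epsilon> \<le> 1 \<and> real n \<ge> 2000000 * real k / (\<gamma>^2 * \<epsilon>^2)"
  hence assms: "1 \<le> k" "0 < \<gamma>" "\<gamma> \<le> 1" "0 < \<epsilon>" "\<epsilon> \<le> 1" "2000000 * real k / (\<gamma>^2 * \<epsilon>^2) \<le> real n"
    by auto
  define r where "r = 1 / (1 + exp \<epsilon>)"
  define L where "L = n div 24"
  define t where "t = L * (1 - 2 * r) * (\<gamma> / sqrt (8 * real k)) / 2"
  note deviation = sample_size_imp_small_deviation_bound[OF assms L_def r_def t_def]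
  have "r \<le> 1 / 2" using randomized_response_gap_ge[of \<epsilon>] assms(4,5) by (simp add: r_def)
  moreover have "(11/12::real)^24 \<le> 3/10" by (simp add: power_divide)
  ultimately have "is_uniformity_tester k \<gamma> n (pmf_of_set (subset_lists k 24)) (group_channels r L)
                     (\<lambda>vs zs. return_pmf (count_test k r L t vs zs))"
    using deviation assms(2) by (intro group_protocol_uniformity_tester) (auto simp: r_def t_def L_def)
  moreover have "is_LDP \<epsilon> k n (group_channels r L)"
    unfolding r_def using assms(4) by (intro group_channels_LDP) simp
  ultimately show "\<exists>U W D. is_LDP \<epsilon> k n W \<and> is_uniformity_tester k \<gamma> n U W D" by blast
qed simp

end
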